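(* Let $d\ge2$, $j\in[d-1]$, $j\le k\le d$, $R$ an abelian group, and let $M=(K,C)$ be a copy of $M_{j,k}$ in a simplicial complex $\mathcal G$ on $[n]$. Let $f$ be a $j$-cochain of $\mathcal G$ with coefficients in $R$ whose support is contained in the flower $\mathcal F(K,C)$. Then: (i) $f$ is a $j$-cocycle if and only if $f=f_{M,r}$ for some $r\in R$; (ii) if there exist $w\in K\setminus C$ and $a\in[n]\setminus K$ such that $(K,C,w,a)$ is a copy of $\hat M_{j,k}$ in $\mathcal G$, then $f$ is a $j$-cocycle but not a $j$-coboundary if and only if $f=f_{M,r}$ for some $r\in R\setminus\{0_R\}$.
   Context: Cochains: a $j$-cochain is a function $f$ from ordered $j$-simplices $[v_0,\dots,v_j]$ of $\mathcal G$ to $R$ with $f(\sigma)=-f(\sigma')$ when $\sigma'$ is obtained by swapping two vertices; its support is the set of unordered $j$-simplices with nonzero value. The coboundary is $(\delta^jf)([v_0,\dots,v_{j+1}])=\sum_{i=0}^{j+1}(-1)^if([v_0,\dots,\hat v_i,\dots,v_{j+1}])$; $j$-cocycles are elements of $\ker\delta^j$, $j$-coboundaries elements of $\operatorname{im}\delta^{j-1}$. Flowers: for a $k$-simplex $K$ and $C\subset K$ with $|C|=j$, $\mathcal F(K,C)=\{C\cup\{w\}\mid w\in K\setminus C\}$ (its elements are petals). A $(j+2)$-set is a $j$-shell if all its $(j+1)$-subsets are $j$-simplices. Copies: for $j+1\le k\le d$, $(K,C)$ is a copy of $M_{j,k}$ if $K$ is a $k$-simplex of $\mathcal G$ and $C\subset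 K$, $|C|=j$, such that every simplex of $\mathcal G$ containing a petal of $\mathcal F(K,C)$ is contained in $K$; $(K,C)$ is a copy of $M_{j,j}$ if $K$ is an isolated $j$-simplex (in no other simplex of $\mathcal G$) and $C$ is the set of first $j$ vertices of $K$ in increasing order. $(K,C,w,a)$ is a copy of $\hat M_{j,k}$ ($j+1\le k\le d$) if $(K,C)$ is a copy of $M_{j,k}$, $w\in K\setminus C$, $a\in[n]\setminus K$ and $C\cup\{w,a\}$ is a $j$-shell; for $k=j$, $(K,C,w,a)$ is a copy of $\hat M_{j,j}$ if $(K,C)$ is a copy of $M_{j,j}$, $w$ is the last vertex of $K$ in increasing order, $a\notin K$ and $K\cup\{a\}$ is a $j$-shell. $f_{M,r}$: let $v_0,\dots,v_{n-1}$ be the ordering of $[n]$ with $C=\{v_0,\dots,v_{j-1}\}$, $K=\{v_0,\dots,v_k\}$, and vertices within $C$, within $K\setminus C$ and within $[n]\setminus K$ in increasing order. For $r\in R$, $f_{M,r}([v_{i_0},\dots,v_{i_j}])$ with $i_0<\dots<i_j$ equals $r$ if $i_s=s$ for $0\le s\le j-1$ and $j\le i_j\le k$, and $0_R$ otherwise, extended to all orderings alternatingly. *)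

theory Defs
  imports Main
begin

definition simplicial_complex :: "nat \<Rightarrow> nat set set \<Rightarrow> bool" where
  "simplicial_complex n G \<longleftrightarrow>
     (\<forall>\<sigma>\<in>G. \<sigma> \<noteq> {} \<and> \<sigma> \<subseteq> {1..n}) \<and>
     (\<forall>\<sigma>\<in>G. \<forall>\<tau>. \<tau> \<subseteq> \<sigma> \<longrightarrow> \<tau> \<noteq> {} \<longrightarrow> \<tau> \<in> G)"

definition simplex :: "nat set set \<Rightarrow> nat \<Rightarrow> nat set \<Rightarrow> bool" where
  "simplex G j \<sigma> \<longleftrightarrow> \<sigma> \<in> G \<and> card \<sigma> = j + 1"

definition ordered_simplex :: "nat set set \<Rightarrow> nat \<Rightarrow> nat list \<Rightarrow> bool" where
  "ordered_simplex G j \<sigma> \<longleftrightarrow> distinct \<sigma> \<and> length \<sigma> = j + 1 \<and> set \<sigma> \<in> G"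

definition swap_pos :: "nat list \<Rightarrow> nat \<Rightarrow> nat \<Rightarrow> nat list" where
  "swap_pos \<sigma> a b = \<sigma>[a := \<sigma> ! b, b := \<sigma> ! a]"

definition cochain :: "nat set set \<Rightarrow> nat \<Rightarrow> (nat list \<Rightarrow> 'r::ab_group_add) \<Rightarrow> bool" where
  "cochain G j f \<longleftrightarrow>
     (\<forall>\<sigma>. \<not> ordered_simplex G j \<sigma> \<longrightarrow> f \<sigma> = 0) \<and>
     (\<forall>\<sigma>. ordered_simplex G j \<sigma> \<longrightarrow>
        (\<forall>a b. a < length \<sigma> \<longrightarrow> b < length \<sigma> \<longrightarrow> a \<noteq> b \<longrightarrow>
           f (swap_pos \<sigma> a b) = - f \<sigma>))"

definition support :: "nat set set \<Rightarrow> nat \<Rightarrow> (nat list \<Rightarrow> 'r::ab_group_add) \<Rightarrow> nat set set" where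
  "support G j f = {set \<sigma> | \<sigma>. ordered_simplex G j \<sigma> \<and> f \<sigma> \<noteq> 0}"

definition del_nth :: "nat \<Rightarrow> 'a list \<Rightarrow> 'a list" where
  "del_nth i xs = take i xs @ drop (Suc i) xs"

definition coboundary_op :: "(nat list \<Rightarrow> 'r::ab_group_add) \<Rightarrow> nat list \<Rightarrow> 'r" where
  "coboundary_op f \<sigma> = (\<Sum>i<length \<sigma>. (if even i then f (del_nth i \<sigma>) else - f (del_nth i \<sigma>)))"

definition is_cocycle :: "nat set set \<Rightarrow> nat \<Rightarrow> (nat list \<Rightarrow> 'r::ab_group_add) \<Rightarrow> bool" where
  "is_cocycle G j f \<longleftrightarrow> (\<forall>\<tau>. ordered_simplex G (j + 1) \<tau> \<longrightarrow> coboundary_op f \<tau> = 0)"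

definition is_coboundary :: "nat set set \<Rightarrow> nat \<Rightarrow> (nat list \<Rightarrow> 'r::ab_group_add) \<Rightarrow> bool" where
  "is_coboundary G j f \<longleftrightarrow>
     (\<exists>g. cochain G (j - 1) g \<and> (\<forall>\<sigma>. ordered_simplex G j \<sigma> \<longrightarrow> f \<sigma> = coboundary_op g \<sigma>))"

definition flower :: "nat set \<Rightarrow> nat set \<Rightarrow> nat set set" where
  "flower K C = {insert w C | w. w \<in> K - C}"

definition shell :: "nat set set \<Rightarrow> nat \<Rightarrow> nat set \<Rightarrow> bool" where
  "shell G j S \<longleftrightarrow> finite S \<and> card S = j + 2 \<and>
     (\<forall>T. T \<subseteq> S \<longrightarrow> card T = j + 1 \<longrightarrow> simplex G j T)"

definition copy_M :: "nat set set \<Rightarrow> nat \<Rightarrow> nat \<Rightarrow> nat \<Rightarrow> nat set \<Rightarrow> nat set \<Rightarrow> bool" where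
  "copy_M G d j k K C \<longleftrightarrow>
     (if j + 1 \<le> k \<and> k \<le> d then
        simplex G k K \<and> C \<subseteq> K \<and> card C = j \<and>
        (\<forall>\<sigma>\<in>G. (\<exists>p\<in>flower K C. p \<subseteq> \<sigma>) \<longrightarrow> \<sigma> \<subseteq> K)
      else if k = j then
        simplex G j K \<and> (\<forall>\<sigma>\<in>G. K \<subseteq> \<sigma> \<longrightarrow> \<sigma> = K) \<and>
        C = set (take j (sorted_list_of_set K))
      else False)"

definition copy_Mhat :: "nat \<Rightarrow> nat set set \<Rightarrow> nat \<Rightarrow> nat \<Rightarrow> nat \<Rightarrow> nat set \<Rightarrow> nat set \<Rightarrow> nat \<Rightarrow> nat \<Rightarrow> bool" where
  "copy_Mhat n G d j k K C w a \<longleftrightarrow>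
     copy_M G d j k K C \<and> a \<in> {1..n} - K \<and>
     (if j + 1 \<le> k then w \<in> K - C \<and> shell G j (C \<union> {w, a})
      else w = Max K \<and> shell G j (insert a K))"

definition vertex_order :: "nat \<Rightarrow> nat set \<Rightarrow> nat set \<Rightarrow> nat list" where
  "vertex_order n K C = sorted_list_of_set C @ sorted_list_of_set (K - C)
      @ sorted_list_of_set ({1..n} - K)"

definition position :: "nat list \<Rightarrow> nat \<Rightarrow> nat" where
  "position xs v = (LEAST i. i < length xs \<and> xs ! i = v)"

definition inversions :: "(nat \<Rightarrow> nat) \<Rightarrow> nat list \<Rightarrow> nat" where
  "inversions p \<sigma> = card {(a, b). a < b \<and> b < length \<sigma> \<and> p (\<sigma> ! a) > p (\<sigma> ! b)}"

text \<open>f_{M,r}: on [v_{i_0},...,v_{i_j}] with i_0<...<i_j the value is r if i_s = s for s<j and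
  j \<le> i_j \<le> k, else 0; extended alternatingly (sign of the sorting permutation); 0 off ordered j-simplices.\<close>
definition f_M :: "nat \<Rightarrow> nat set set \<Rightarrow> nat \<Rightarrow> nat \<Rightarrow> nat set \<Rightarrow> nat set \<Rightarrow> 'r::ab_group_add \<Rightarrow> nat list \<Rightarrow> 'r" where
  "f_M n G j k K C r \<sigma> =
     (if ordered_simplex G j \<sigma> then
        (let pos = (\<lambda>v. position (vertex_order n K C) v);
             is = map pos (sort_key pos \<sigma>);
             val = (if (\<forall>s<j. is ! s = s) \<and> j \<le> is ! j \<and> is ! j \<le> k then r else 0)
         in if even (inversions pos \<sigma>) then val else - val)
      else 0)"

end

theory Submission
  imports Defs
begin

(* Cochains are alternating, so a cochain f supported on the flower is determined by its values
   r_w = f [c_1, ..., c_j, w] on the petals (c_1 < ... < c_j the vertices of C, w in K - C), and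
   f_{M,r} is the cochain with all r_w = r.  On a (j+1)-simplex the faces missing a vertex of C are
   not petals, and a (j+1)-simplex containing a petal lies in K, so it is C plus two vertices w, w'
   of K - C, where the coboundary of f is +-(r_w' - r_w).  Hence f is a cocycle iff all r_w agree.
   If moreover f = \<delta>g, then \<delta>f = \<delta>\<delta>g vanishes on the shell C + {w, a}, all of whose faces
   are simplices; as C + {a} is not a petal, this forces r_w = 0. *)

lemma length_swap_pos [simp]: "length (swap_pos xs a b) = length xs"
  by (simp add: swap_pos_def)

lemma set_swap_pos: "a < length xs \<Longrightarrow> b < length xs \<Longrightarrow> set (swap_pos xs a b) = set xs"
  by (simp add: swap_pos_def)

lemma distinct_swap_pos: "a < length xs \<Longrightarrow> b < length xs \<Longrightarrow> distinct (swap_pos xs a b) = distinct xs"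
  by (simp add: swap_pos_def)

definition transp_Suc :: "nat \<Rightarrow> nat \<Rightarrow> nat" where
  "transp_Suc i m = (if m = i then Suc i else if m = Suc i then i else m)"

lemma nth_swap_pos_Suc:
  "Suc i < length xs \<Longrightarrow> m < length xs \<Longrightarrow> swap_pos xs i (Suc i) ! m = xs ! transp_Suc i m"
  by (auto simp: swap_pos_def nth_list_update transp_Suc_def)

lemma transp_Suc_transp_Suc [simp]: "transp_Suc i (transp_Suc i m) = m"
  by (simp add: transp_Suc_def)

lemma transp_Suc_less_iff: "Suc i < L \<Longrightarrow> transp_Suc i m < L \<longleftrightarrow> m < L"
  by (auto simp: transp_Suc_def)

lemma sort_key_eq_if_sorted:
  assumes "distinct xs" "distinct ys" "set xs = set ys" "inj_on p (set xs)" "sorted (map p ys)"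
  shows "sort_key p xs = ys"
  by (rule map_sorted_distinct_set_unique[where f = p])
    (use assms in \<open>auto simp: distinct_map intro: inj_on_subset\<close>)

definition inversion_pairs :: "(nat \<Rightarrow> nat) \<Rightarrow> nat list \<Rightarrow> (nat \<times> nat) set" where
  "inversion_pairs p xs = {(a, b). a < b \<and> b < length xs \<and> p (xs ! b) < p (xs ! a)}"

lemma inversions_eq_card: "inversions p xs = card (inversion_pairs p xs)"
  by (simp add: inversions_def inversion_pairs_def)

lemma finite_inversion_pairs: "finite (inversion_pairs p xs)"
  unfolding inversion_pairs_def
  by (rule finite_subset[of _ "{..<length xs} \<times> {..<length xs}"]) auto

lemma inversions_eq_0_if_sorted: "sorted (map p xs) \<Longrightarrow> inversions p xs = 0"
proof -
  assume "sorted (map p xs)"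
  then have "inversion_pairs p xs = {}"
    using sorted_nth_mono[of "map p xs"] by (auto simp: inversion_pairs_def not_less[symmetric])
  then show ?thesis
    by (simp add: inversions_eq_card)
qed

lemma inversion_pairs_swap_Suc_iff:
  assumes i: "Suc i < length xs" and desc: "p (xs ! Suc i) < p (xs ! i)"
  shows "(a, b) \<in> inversion_pairs p xs \<longleftrightarrow>
    (a, b) = (i, Suc i) \<or> (transp_Suc i a, transp_Suc i b) \<in> inversion_pairs p (swap_pos xs i (Suc i))"
proof -
  define ys where "ys = swap_pos xs i (Suc i)"
  have ys_nth: "ys ! transp_Suc i m = xs ! m" if "m < length xs" for m
    using i that by (simp add: ys_def nth_swap_pos_Suc transp_Suc_less_iff)
  show ?thesis
  proof (cases "{a, b} = {i, Suc i}")
    case True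
    then consider "(a, b) = (i, Suc i)" | "(a, b) = (Suc i, i)"
      by (auto simp: doubleton_eq_iff)
    then show ?thesis
      using i desc ys_nth[of i] ys_nth[of "Suc i"]
      by cases (auto simp: inversion_pairs_def transp_Suc_def ys_def)
  next
    case False
    then have "transp_Suc i a < transp_Suc i b \<longleftrightarrow> a < b"
      by (auto simp: transp_Suc_def)
    moreover have "length ys = length xs"
      by (simp add: ys_def)
    ultimately have "(transp_Suc i a, transp_Suc i b) \<in> inversion_pairs p ys
        \<longleftrightarrow> a < b \<and> b < length xs \<and> p (ys ! transp_Suc i b) < p (ys ! transp_Suc i a)"
      using transp_Suc_less_iff[OF i] by (auto simp: inversion_pairs_def)
    also have "\<dots> \<longleftrightarrow> (a, b) \<in> inversion_pairs p xs"
      using ys_nth[of a] ys_nth[of b] by (auto simp: inversion_pairs_def)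
    finally show ?thesis
      using False by (auto simp: ys_def)
  qed
qed

lemma inversions_swap_Suc:
  assumes i: "Suc i < length xs" and desc: "p (xs ! Suc i) < p (xs ! i)"
  shows "inversions p xs = Suc (inversions p (swap_pos xs i (Suc i)))"
proof -
  define \<phi> where "\<phi> = map_prod (transp_Suc i) (transp_Suc i)"
  define I where "I = inversion_pairs p (swap_pos xs i (Suc i))"
  have \<phi>_\<phi>: "\<phi> (\<phi> x) = x" for x
    by (simp add: \<phi>_def map_prod_def split: prod.splits)
  then have "\<phi> ` I = {x. \<phi> x \<in> I}"
    using image_eqI[where f = \<phi>, OF \<phi>_\<phi>[symmetric]] by auto
  moreover have "x \<in> inversion_pairs p xs \<longleftrightarrow> x = (i, Suc i) \<or> \<phi> x \<in> I" for x
    using inversion_pairs_swap_Suc_iff[OF i desc] by (cases x) (simp add: \<phi>_def I_def)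
  ultimately have "inversion_pairs p xs = insert (i, Suc i) (\<phi> ` I)" and "(i, Suc i) \<notin> \<phi> ` I"
    by (blast, simp add: \<phi>_def transp_Suc_def I_def inversion_pairs_def)
  moreover have "inj \<phi>"
    by (rule inj_on_inverseI[of _ \<phi>]) (rule \<phi>_\<phi>)
  ultimately show ?thesis
    by (simp add: inversions_eq_card card_image inj_on_subset finite_inversion_pairs I_def)
qed

definition alt_sign :: "nat \<Rightarrow> 'a::ab_group_add \<Rightarrow> 'a" where
  "alt_sign m x = (if even m then x else - x)"

lemma alt_sign_0 [simp]: "alt_sign m 0 = 0"
  by (simp add: alt_sign_def)

lemma alt_sign_eq_0_iff [simp]: "alt_sign m x = 0 \<longleftrightarrow> x = 0"
  by (simp add: alt_sign_def)

lemma alt_sign_sum: "alt_sign m (\<Sum>x\<in>A. F x) = (\<Sum>x\<in>A. alt_sign m (F x))"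
  by (simp add: alt_sign_def sum_negf)

lemma alt_sign_alt_sign: "alt_sign m (alt_sign m' x) = alt_sign (m + m') x"
  by (simp add: alt_sign_def)

lemma alt_sign_Suc: "alt_sign (Suc m) x = - alt_sign m x"
  by (simp add: alt_sign_def)

definition alternating :: "(nat list \<Rightarrow> 'a::ab_group_add) \<Rightarrow> bool" where
  "alternating h \<longleftrightarrow> (\<forall>xs i. Suc i < length xs \<longrightarrow> h (swap_pos xs i (Suc i)) = - h xs)"

lemma alternating_eq_alt_sign_sort_key:
  assumes alt: "alternating h"
  shows "distinct xs \<Longrightarrow> inj_on p (set xs) \<Longrightarrow>
    h xs = alt_sign (inversions p xs) (h (sort_key p xs))"
proof (induction "inversions p xs" arbitrary: xs rule: less_induct)
  case less
  show ?case
  proof (cases "sorted (map p xs)")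
    case True
    then show ?thesis
      by (simp add: inversions_eq_0_if_sorted sort_key_id_if_sorted alt_sign_def)
  next
    case False
    then obtain i where i: "Suc i < length xs" and desc: "p (xs ! Suc i) < p (xs ! i)"
      by (auto simp: sorted_iff_nth_Suc not_le)
    define ys where "ys = swap_pos xs i (Suc i)"
    have inv: "inversions p xs = Suc (inversions p ys)"
      using inversions_swap_Suc[OF i desc] by (simp add: ys_def)
    have "set ys = set xs" "distinct ys"
      using i less.prems by (simp_all add: ys_def set_swap_pos distinct_swap_pos)
    then have "h ys = alt_sign (inversions p ys) (h (sort_key p ys))"
      and "sort_key p ys = sort_key p xs"
      using less inv by (auto intro: sort_key_eq_if_sorted)
    moreover have "h ys = - h xs"
      using alt i by (simp add: alternating_def ys_def)
    ultimately have "h xs = - alt_sign (inversions p ys) (h (sort_key p xs))"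
      by (metis minus_minus)
    then show ?thesis
      by (simp add: inv alt_sign_Suc)
  qed
qed

lemma alternating_eq_0_if_perm:
  assumes "alternating h" "distinct xs" "distinct ys" "set xs = set ys" "h ys = 0"
  shows "h xs = 0"
proof -
  have "sort xs = sort ys"
    using assms by (metis distinct_remdups_id sorted_list_of_set_sort_remdups)
  have sort: "h zs = alt_sign (inversions (\<lambda>x. x) zs) (h (sort zs))" if "distinct zs" for zs
    using alternating_eq_alt_sign_sort_key[OF assms(1) that] by simp
  have "h (sort ys) = 0"
    using sort[of ys] assms(3,5) by (auto simp: alt_sign_def split: if_splits)
  then show ?thesis
    using sort[of xs] assms(2) \<open>sort xs = sort ys\<close> by simp
qed

lemma length_del_nth [simp]: "i < length xs \<Longrightarrow> length (del_nth i xs) = length xs - 1"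
  by (simp add: del_nth_def)

lemma nth_del_nth:
  "i < length xs \<Longrightarrow> m < length xs - 1 \<Longrightarrow> del_nth i xs ! m = xs ! (if m < i then m else Suc m)"
  by (auto simp: del_nth_def nth_append min_def)

lemma distinct_del_nth: "distinct xs \<Longrightarrow> distinct (del_nth i xs)"
  unfolding del_nth_def using set_take_disj_set_drop_if_distinct[of xs i "Suc i"] by auto

lemma set_del_nth_subset: "set (del_nth i xs) \<subseteq> set xs"
  unfolding del_nth_def using set_take_subset set_drop_subset by fastforce

lemma set_del_nth:
  assumes "distinct xs" "i < length xs"
  shows "set (del_nth i xs) = set xs - {xs ! i}"
proof -
  have "xs = take i xs @ xs ! i # drop (Suc i) xs"
    using assms(2) by (rule id_take_nth_drop)
  then have "distinct (take i xs @ xs ! i # drop (Suc i) xs)"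
    and "set xs = set (take i xs @ xs ! i # drop (Suc i) xs)"
    using assms(1) by simp_all
  then show ?thesis
    unfolding del_nth_def by auto
qed

lemma del_nth_swap_pos_other:
  assumes i: "Suc i < length xs" and l: "l < length xs" "l \<noteq> i" "l \<noteq> Suc i"
  defines "i' \<equiv> if l < i then i - 1 else i"
  shows "del_nth l (swap_pos xs i (Suc i)) = swap_pos (del_nth l xs) i' (Suc i')"
proof (rule nth_equalityI)
  fix m assume "m < length (del_nth l (swap_pos xs i (Suc i)))"
  then have m: "m < length xs - 1"
    using l by simp
  have i': "Suc i' < length (del_nth l xs)"
    using i l by (auto simp: i'_def)
  have index: "transp_Suc i (if m < l then m else Suc m)
      = (if transp_Suc i' m < l then transp_Suc i' m else Suc (transp_Suc i' m))"
    unfolding transp_Suc_def i'_def using l by (cases "l < i"; cases "m < l"; simp; linarith?)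
  have "del_nth l (swap_pos xs i (Suc i)) ! m = swap_pos xs i (Suc i) ! (if m < l then m else Suc m)"
    by (rule nth_del_nth) (use l m in simp_all)
  also have "\<dots> = xs ! transp_Suc i (if m < l then m else Suc m)"
    by (rule nth_swap_pos_Suc) (use i l m in auto)
  also have "\<dots> = xs ! (if transp_Suc i' m < l then transp_Suc i' m else Suc (transp_Suc i' m))"
    using index by (rule arg_cong)
  also have "\<dots> = del_nth l xs ! transp_Suc i' m"
    by (rule nth_del_nth[symmetric]) (use l i' m transp_Suc_less_iff[OF i'] in auto)
  also have "\<dots> = swap_pos (del_nth l xs) i' (Suc i') ! m"
    by (rule nth_swap_pos_Suc[symmetric]) (use i' m l in auto)
  finally show "del_nth l (swap_pos xs i (Suc i)) ! m = swap_pos (del_nth l xs) i' (Suc i') ! m" .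
qed (use l in simp)

lemma del_nth_swap_pos_fst: "Suc i < length xs \<Longrightarrow> del_nth i (swap_pos xs i (Suc i)) = del_nth (Suc i) xs"
  by (rule nth_equalityI) (auto simp: nth_del_nth nth_swap_pos_Suc transp_Suc_def, metis less_antisym)

lemma del_nth_swap_pos_snd: "Suc i < length xs \<Longrightarrow> del_nth (Suc i) (swap_pos xs i (Suc i)) = del_nth i xs"
  by (rule nth_equalityI) (auto simp: nth_del_nth nth_swap_pos_Suc transp_Suc_def, metis less_antisym)

lemma del_nth_del_nth:
  "i \<le> m \<Longrightarrow> Suc m < length xs \<Longrightarrow> del_nth m (del_nth i xs) = del_nth i (del_nth (Suc m) xs)"
  by (rule nth_equalityI) (auto simp: nth_del_nth)

lemma coboundary_op_eq: "coboundary_op f xs = (\<Sum>l<length xs. alt_sign l (f (del_nth l xs)))"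
  by (simp add: coboundary_op_def alt_sign_def)

lemma alternating_coboundary_op:
  assumes alt: "alternating f"
  shows "alternating (coboundary_op f)"
  unfolding alternating_def
proof (intro allI impI)
  fix xs :: "nat list" and i assume i: "Suc i < length xs"
  have summand: "alt_sign l (f (del_nth l (swap_pos xs i (Suc i))))
      = - alt_sign (transp_Suc i l) (f (del_nth (transp_Suc i l) xs))"
    if l: "l < length xs" for l
  proof (cases "l = i \<or> l = Suc i")
    case True
    then show ?thesis
      using i by (auto simp: transp_Suc_def alt_sign_def del_nth_swap_pos_fst del_nth_swap_pos_snd)
  next
    case False
    define i' where "i' = (if l < i then i - 1 else i)"
    have "Suc i' < length (del_nth l xs)"
      using i l False by (auto simp: i'_def)
    then have "f (swap_pos (del_nth l xs) i' (Suc i')) = - f (del_nth l xs)"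
      using alt unfolding alternating_def by blast
    moreover have "del_nth l (swap_pos xs i (Suc i)) = swap_pos (del_nth l xs) i' (Suc i')"
      using del_nth_swap_pos_other[OF i l] False unfolding i'_def by blast
    ultimately show ?thesis
      using False by (simp add: transp_Suc_def alt_sign_def)
  qed
  have "coboundary_op f (swap_pos xs i (Suc i))
      = (\<Sum>l<length xs. - alt_sign (transp_Suc i l) (f (del_nth (transp_Suc i l) xs)))"
    unfolding coboundary_op_eq using summand by simp
  also have "\<dots> = (\<Sum>l<length xs. - alt_sign l (f (del_nth l xs)))"
    by (rule sum.reindex_bij_witness[where i = "transp_Suc i" and j = "transp_Suc i"])
      (use i in \<open>auto simp: transp_Suc_less_iff\<close>)
  also have "\<dots> = - coboundary_op f xs"
    unfolding coboundary_op_eq by (simp add: sum_negf)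
  finally show "coboundary_op f (swap_pos xs i (Suc i)) = - coboundary_op f xs" .
qed

lemma coboundary_op_coboundary_op: "coboundary_op (coboundary_op g) xs = 0"
proof -
  \<comment> \<open>The term deleting positions i and then m \<ge> i cancels the one deleting m + 1 and then i.\<close>
  define L where "L = length xs"
  define H where "H i m = alt_sign (i + m) (g (del_nth m (del_nth i xs)))" for i m
  have "coboundary_op (coboundary_op g) xs = (\<Sum>i<L. \<Sum>m<L - 1. H i m)"
    unfolding coboundary_op_eq L_def H_def by (simp add: alt_sign_sum alt_sign_alt_sign)
  also have "\<dots> = (\<Sum>i<L. (\<Sum>m<i. H i m) + (\<Sum>m\<in>{i..<L - 1}. H i m))"
  proof (rule sum.cong)
    fix i assume "i \<in> {..<L}"
    then have "{..<L - 1} = {..<i} \<union> {i..<L - 1}" "{..<i} \<inter> {i..<L - 1} = {}"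
      by auto
    then show "(\<Sum>m<L - 1. H i m) = (\<Sum>m<i. H i m) + (\<Sum>m\<in>{i..<L - 1}. H i m)"
      by (simp add: sum.union_disjoint)
  qed simp
  also have "\<dots> = (\<Sum>i<L. \<Sum>m<i. H i m) + (\<Sum>i<L. \<Sum>m\<in>{i..<L - 1}. H i m)"
    by (simp add: sum.distrib)
  also have "(\<Sum>i<L. \<Sum>m\<in>{i..<L - 1}. H i m) = (\<Sum>i<L. \<Sum>m\<in>{Suc i..<L}. - H m i)"
  proof (rule sum.cong)
    fix i assume "i \<in> {..<L}"
    show "(\<Sum>m\<in>{i..<L - 1}. H i m) = (\<Sum>m\<in>{Suc i..<L}. - H m i)"
    proof (rule sum.reindex_bij_witness[where i = "\<lambda>m. m - 1" and j = Suc])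
      fix m assume "m \<in> {i..<L - 1}"
      then show "- H (Suc m) i = H i m"
        using del_nth_del_nth[of i m xs] by (auto simp: H_def L_def alt_sign_def add.commute)
    qed auto
  qed simp
  also have "\<dots> = (\<Sum>i<L. \<Sum>m\<in>{m \<in> {..<L}. i < m}. - H m i)"
    by (rule sum.cong[OF refl], rule sum.cong) auto
  also have "\<dots> = (\<Sum>m<L. \<Sum>i\<in>{i \<in> {..<L}. i < m}. - H m i)"
    by (rule sum.swap_restrict) auto
  also have "\<dots> = (\<Sum>m<L. \<Sum>i<m. - H m i)"
    by (rule sum.cong) (auto intro: sum.cong)
  finally show ?thesis
    by (simp add: sum_negf)
qed

lemma f_M_zero: "f_M n G j k K C 0 = (\<lambda>_. 0)"
  by (simp add: fun_eq_iff f_M_def Let_def)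

lemma ordered_simplex_swap_pos:
  "a < length xs \<Longrightarrow> b < length xs \<Longrightarrow> ordered_simplex G j (swap_pos xs a b) \<longleftrightarrow> ordered_simplex G j xs"
  by (simp add: ordered_simplex_def set_swap_pos distinct_swap_pos)

lemma alternating_if_cochain: "cochain G j f \<Longrightarrow> alternating f"
  unfolding alternating_def cochain_def
  by (metis Suc_lessD n_not_Suc_n ordered_simplex_swap_pos neg_0_equal_iff_equal)

lemma is_coboundary_zero: "is_coboundary G j (\<lambda>_. 0)"
  unfolding is_coboundary_def
  by (rule exI[where x = "\<lambda>_. 0"]) (simp add: cochain_def coboundary_op_def cong: if_cong)

lemma coboundary_op_eq_0_if_is_coboundary:
  assumes "is_coboundary G j f" and "\<And>l. l < length xs \<Longrightarrow> ordered_simplex G j (del_nth l xs)"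
  shows "coboundary_op f xs = 0"
proof -
  obtain g where g: "\<And>ys. ordered_simplex G j ys \<Longrightarrow> f ys = coboundary_op g ys"
    using assms(1) unfolding is_coboundary_def by blast
  have "coboundary_op f xs = (\<Sum>l<length xs. alt_sign l (coboundary_op g (del_nth l xs)))"
    unfolding coboundary_op_eq[of f] using assms(2) g by simp
  also have "\<dots> = coboundary_op (coboundary_op g) xs"
    by (rule coboundary_op_eq[symmetric])
  finally show ?thesis
    by (simp add: coboundary_op_coboundary_op)
qed

text \<open>Both kinds of copies of M_{j,k} (k > j, and the isolated simplex for k = j)
  satisfy these axioms, see \<open>closed_flower_if_copy_M\<close>.\<close>

locale closed_flower =
  fixes n j k :: nat and G :: "nat set set" and K C :: "nat set"
  assumes complex: "simplicial_complex n G"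
    and K_simplex: "simplex G k K"
    and C_subset_K: "C \<subseteq> K" and card_C: "card C = j" and j_le_k: "j \<le> k"
    and closed: "\<forall>\<sigma>\<in>G. (\<exists>p\<in>flower K C. p \<subseteq> \<sigma>) \<longrightarrow> \<sigma> \<subseteq> K"
begin

abbreviation pos :: "nat \<Rightarrow> nat" where
  "pos \<equiv> position (vertex_order n K C)"

abbreviation core :: "nat list" where
  "core \<equiv> sorted_list_of_set C"

lemma K_in_G: "K \<in> G" and card_K: "card K = k + 1"
  using K_simplex by (simp_all add: simplex_def)

lemma K_subset: "K \<subseteq> {1..n}"
  using complex K_in_G unfolding simplicial_complex_def by auto

lemma finite_K: "finite K"
  by (rule card_ge_0_finite) (simp add: card_K)

lemma finite_C: "finite C"
  using finite_K C_subset_K finite_subset by blast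

lemma face_in_G: "\<sigma> \<in> G \<Longrightarrow> \<tau> \<subseteq> \<sigma> \<Longrightarrow> \<tau> \<noteq> {} \<Longrightarrow> \<tau> \<in> G"
  using complex unfolding simplicial_complex_def by blast

lemma G_subset: "\<sigma> \<in> G \<Longrightarrow> \<sigma> \<subseteq> {1..n}"
  using complex unfolding simplicial_complex_def by blast

declare card_C [simp]

lemma set_core [simp]: "set core = C"
  using finite_C by simp

lemma card_K_minus_C: "card (K - C) = k + 1 - j"
  using card_K card_C C_subset_K finite_C by (simp add: card_Diff_subset)

lemma petal_vertex_exists: "\<exists>w. w \<in> K - C"
  using card_K_minus_C j_le_k card_gt_0_iff[of "K - C"] by auto

lemma distinct_vertex_order: "distinct (vertex_order n K C)"
  unfolding vertex_order_def using finite_K finite_C C_subset_K by auto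

lemma set_vertex_order: "set (vertex_order n K C) = {1..n}"
  unfolding vertex_order_def using finite_K finite_C C_subset_K K_subset by auto

lemma position_nth: "m < length (vertex_order n K C) \<Longrightarrow> pos (vertex_order n K C ! m) = m"
  unfolding position_def
  by (rule Least_equality) (use distinct_vertex_order nth_eq_iff_index_eq in auto)

lemma nth_position: "v \<in> {1..n} \<Longrightarrow> vertex_order n K C ! pos v = v"
  by (metis in_set_conv_nth position_nth set_vertex_order)

lemma inj_on_pos: "A \<subseteq> {1..n} \<Longrightarrow> inj_on pos A"
  by (metis inj_onI nth_position subsetD)

lemma position_eq_iff_core_nth:
  assumes "v \<in> {1..n}" "m < j"
  shows "pos v = m \<longleftrightarrow> v = core ! m"
proof -
  have "vertex_order n K C ! m = core ! m" "m < length (vertex_order n K C)"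
    using assms(2) by (simp_all add: vertex_order_def nth_append)
  then show ?thesis
    using nth_position[OF assms(1)] position_nth by metis
qed

lemma position_petal_range_iff:
  assumes "v \<in> {1..n}"
  shows "j \<le> pos v \<and> pos v \<le> k \<longleftrightarrow> v \<in> K - C"
proof
  have vo: "vertex_order n K C ! (j + q) = sorted_list_of_set (K - C) ! q" if "q \<le> k - j" for q
    using that card_K_minus_C j_le_k by (simp add: vertex_order_def nth_append)
  {
    assume "j \<le> pos v \<and> pos v \<le> k"
    then have "v = sorted_list_of_set (K - C) ! (pos v - j)" "pos v - j < card (K - C)"
      using vo[of "pos v - j"] nth_position[OF assms] card_K_minus_C by auto
    then show "v \<in> K - C"
      using finite_K by (metis finite_Diff length_sorted_list_of_set nth_mem set_sorted_list_of_set)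
  next
    assume "v \<in> K - C"
    then obtain q where q: "q < k + 1 - j" "v = sorted_list_of_set (K - C) ! q"
      using card_K_minus_C finite_K
      by (metis finite_Diff in_set_conv_nth length_sorted_list_of_set set_sorted_list_of_set)
    moreover have "j + q < length (vertex_order n K C)"
      using q card_K_minus_C by (simp add: vertex_order_def)
    ultimately have "pos v = j + q"
      using vo[of q] position_nth[of "j + q"] by simp
    then show "j \<le> pos v \<and> pos v \<le> k"
      using q by simp
  }
qed

lemma position_core_nth: "m < j \<Longrightarrow> pos (core ! m) = m"
  using position_eq_iff_core_nth[of "core ! m" m] finite_C C_subset_K K_subset
  by (metis card_C length_sorted_list_of_set nth_mem set_core subsetD)

lemma sorted_petal: "w \<in> K - C \<Longrightarrow> sorted (map pos (core @ [w]))"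
proof -
  assume w: "w \<in> K - C"
  have "map pos core = [0..<j]"
    by (rule nth_equalityI) (simp_all add: position_core_nth)
  then show ?thesis
    using position_petal_range_iff[of w] w K_subset by (auto simp: sorted_append)
qed

lemma sort_key_eq_petal_iff:
  assumes "distinct xs" "set xs \<subseteq> {1..n}" "w \<in> K - C"
  shows "sort_key pos xs = core @ [w] \<longleftrightarrow> set xs = insert w C"
proof
  assume "sort_key pos xs = core @ [w]"
  then show "set xs = insert w C"
    by (metis set_core set_sort list.set(2) set_append empty_set Un_insert_right sup_bot.right_neutral)
next
  assume "set xs = insert w C"
  then show "sort_key pos xs = core @ [w]"
    using assms sorted_petal[OF assms(3)] inj_on_pos[OF assms(2)]
    by (intro sort_key_eq_if_sorted) auto
qed

lemma f_M_apply:
  assumes "ordered_simplex G j xs"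
  shows "f_M n G j k K C r xs
    = alt_sign (inversions pos xs) (if \<exists>w\<in>K - C. set xs = insert w C then r else 0)"
proof -
  define ys where "ys = sort_key pos xs"
  have xs: "distinct xs" "length xs = j + 1" "set xs \<subseteq> {1..n}"
    using assms G_subset unfolding ordered_simplex_def by auto
  then have ys: "length ys = j + 1" "set ys \<subseteq> {1..n}"
    by (simp_all add: ys_def)
  have "pos (ys ! i) = i \<longleftrightarrow> ys ! i = core ! i" if "i < j" for i
    using that ys position_eq_iff_core_nth[of "ys ! i" i] by (simp add: subset_iff)
  then have "(\<forall>i<j. pos (ys ! i) = i) \<longleftrightarrow> take j ys = core"
    using ys(1) by (simp add: list_eq_iff_nth_eq)
  moreover have "j \<le> pos (ys ! j) \<and> pos (ys ! j) \<le> k \<longleftrightarrow> ys ! j \<in> K - C"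
    using ys position_petal_range_iff[of "ys ! j"] by (auto simp: subset_iff)
  moreover have "take j ys = core \<and> ys ! j \<in> K - C \<longleftrightarrow> (\<exists>w\<in>K - C. ys = core @ [w])"
  proof
    assume "take j ys = core \<and> ys ! j \<in> K - C"
    moreover have "ys = take j ys @ [ys ! j]"
      using ys(1) by (metis Suc_eq_plus1 lessI take_Suc_conv_app_nth take_all order_refl)
    ultimately show "\<exists>w\<in>K - C. ys = core @ [w]"
      by metis
  qed (auto simp: nth_append)
  ultimately have "(\<forall>i<j. pos (ys ! i) = i) \<and> j \<le> pos (ys ! j) \<and> pos (ys ! j) \<le> k
      \<longleftrightarrow> (\<exists>w\<in>K - C. ys = core @ [w])"
    by blast
  also have "\<dots> \<longleftrightarrow> (\<exists>w\<in>K - C. set xs = insert w C)"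
    using sort_key_eq_petal_iff[OF xs(1,3)] by (auto simp: ys_def)
  finally show ?thesis
    using assms ys(1) by (simp add: f_M_def Let_def alt_sign_def ys_def)
qed

lemma ordered_simplex_petal: "w \<in> K - C \<Longrightarrow> ordered_simplex G j (core @ [w])"
  using face_in_G[OF K_in_G, of "insert w C"] C_subset_K finite_C
  by (auto simp: ordered_simplex_def)

lemma f_M_petal:
  assumes "w \<in> K - C"
  shows "f_M n G j k K C r (core @ [w]) = r"
proof -
  have "inversions pos (core @ [w]) = 0"
    using sorted_petal[OF assms] by (rule inversions_eq_0_if_sorted)
  moreover have petal: "\<exists>w'\<in>K - C. set (core @ [w]) = insert w' C"
    using assms by auto
  ultimately show ?thesis
    unfolding f_M_apply[OF ordered_simplex_petal[OF assms]] if_P[OF petal] by (simp add: alt_sign_def)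
qed

end

locale flower_cochain = closed_flower +
  fixes f :: "nat list \<Rightarrow> 'r::ab_group_add"
  assumes cochain: "cochain G j f"
    and support: "support G j f \<subseteq> flower K C"
begin

lemma alternating: "alternating f"
  using cochain by (rule alternating_if_cochain)

lemma eq_0_if_not_petal:
  assumes "\<forall>w\<in>K - C. set xs \<noteq> insert w C"
  shows "f xs = 0"
proof (rule ccontr)
  assume nonzero: "f xs \<noteq> 0"
  then have "ordered_simplex G j xs"
    using cochain unfolding cochain_def by blast
  then have "set xs \<in> flower K C"
    using support nonzero unfolding support_def by blast
  then show False
    using assms unfolding flower_def by blast
qed

lemma coboundary_op_core_pair:
  assumes "x \<notin> C" "y \<notin> C" "x \<noteq> y"
  shows "coboundary_op f (core @ [x, y]) = alt_sign j (f (core @ [y]) - f (core @ [x]))"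
proof -
  have "f (del_nth l (core @ [x, y])) = 0" if "l \<in> {..<j}" for l
  proof (rule eq_0_if_not_petal)
    have "core ! l \<in> C - set (del_nth l (core @ [x, y]))"
      using that assms finite_C nth_mem[of l core] by (simp add: set_del_nth nth_append)
    then show "\<forall>w\<in>K - C. set (del_nth l (core @ [x, y])) \<noteq> insert w C"
      by blast
  qed
  then have "(\<Sum>l<j. alt_sign l (f (del_nth l (core @ [x, y])))) = 0"
    by (simp add: sum.neutral)
  moreover have "del_nth j (core @ [x, y]) = core @ [y]" "del_nth (Suc j) (core @ [x, y]) = core @ [x]"
    by (simp_all add: del_nth_def)
  ultimately show ?thesis
    by (simp add: coboundary_op_eq) (simp add: alt_sign_def)
qed

lemma eq_f_M_if_petals_eq:
  assumes "\<And>w. w \<in> K - C \<Longrightarrow> f (core @ [w]) = r"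
  shows "f = f_M n G j k K C r"
proof
  fix xs
  show "f xs = f_M n G j k K C r xs"
  proof (cases "ordered_simplex G j xs")
    case False
    then show ?thesis
      using cochain by (simp add: cochain_def f_M_def)
  next
    case True
    then have xs: "distinct xs" "set xs \<subseteq> {1..n}"
      using G_subset by (auto simp: ordered_simplex_def)
    have "f (sort_key pos xs) = (if \<exists>w\<in>K - C. set xs = insert w C then r else 0)"
    proof (cases "\<exists>w\<in>K - C. set xs = insert w C")
      case True
      then obtain w where w: "w \<in> K - C" "set xs = insert w C"
        by blast
      then have "sort_key pos xs = core @ [w]"
        using sort_key_eq_petal_iff[OF xs w(1)] by blast
      then show ?thesis
        using True assms[OF w(1)] by simp
    next
      case False
      then show ?thesis
        using eq_0_if_not_petal[of "sort_key pos xs"] by simp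
    qed
    moreover have "f xs = alt_sign (inversions pos xs) (f (sort_key pos xs))"
      using alternating xs(1) inj_on_pos[OF xs(2)] by (rule alternating_eq_alt_sign_sort_key)
    ultimately show ?thesis
      by (simp only: f_M_apply[OF True])
  qed
qed

lemma petals_eq_if_is_cocycle:
  assumes "is_cocycle G j f" "w \<in> K - C" "w' \<in> K - C"
  shows "f (core @ [w]) = f (core @ [w'])"
proof (cases "w = w'")
  case False
  have "insert w (insert w' C) \<in> G"
    using face_in_G[OF K_in_G, of "insert w (insert w' C)"] C_subset_K assms(2,3) by auto
  then have "ordered_simplex G (j + 1) (core @ [w, w'])"
    using assms(2,3) False finite_C by (auto simp: ordered_simplex_def)
  then have "coboundary_op f (core @ [w, w']) = 0"
    using assms(1) unfolding is_cocycle_def by blast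
  then show ?thesis
    using coboundary_op_core_pair[of w w'] assms(2,3) False by simp
qed simp

lemma is_cocycle_if_petals_eq:
  assumes petals: "\<And>w w'. w \<in> K - C \<Longrightarrow> w' \<in> K - C \<Longrightarrow> f (core @ [w]) = f (core @ [w'])"
  shows "is_cocycle G j f"
  unfolding is_cocycle_def
proof (intro allI impI)
  fix xs assume xs: "ordered_simplex G (j + 1) xs"
  show "coboundary_op f xs = 0"
  proof (cases "\<exists>w\<in>K - C. insert w C \<subseteq> set xs")
    case False
    then have "f (del_nth l xs) = 0" for l
      using set_del_nth_subset[of l xs] by (intro eq_0_if_not_petal) blast
    then show ?thesis
      by (simp add: coboundary_op_eq)
  next
    case True
    then obtain w where w: "w \<in> K - C" "insert w C \<subseteq> set xs"
      by blast
    have "insert w C \<in> flower K C"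
      using w(1) unfolding flower_def by blast
    moreover have "set xs \<in> G"
      using xs by (simp add: ordered_simplex_def)
    ultimately have "set xs \<subseteq> K"
      using closed w(2) by blast
    moreover have "card (set xs - C) = 2"
      using xs w(2) finite_C by (simp add: card_Diff_subset distinct_card ordered_simplex_def)
    then obtain w1 w2 where w12: "set xs - C = {w1, w2}" "w1 \<noteq> w2"
      by (auto simp: card_2_iff)
    ultimately have w1: "w1 \<in> K - C" and w2: "w2 \<in> K - C"
      by auto
    have "coboundary_op f (core @ [w1, w2]) = 0"
      using coboundary_op_core_pair[of w1 w2] petals[OF w2 w1] w1 w2 w12(2) by simp
    moreover have "set xs = set (core @ [w1, w2])"
      using w(2) w12(1) finite_C by auto
    moreover have "distinct xs" "distinct (core @ [w1, w2])"
      using xs w1 w2 w12(2) by (auto simp: ordered_simplex_def)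
    ultimately show ?thesis
      using alternating_coboundary_op[OF alternating] alternating_eq_0_if_perm by metis
  qed
qed

lemma petal_eq_if_eq_f_M: "f = f_M n G j k K C r \<Longrightarrow> w \<in> K - C \<Longrightarrow> f (core @ [w]) = r"
  using f_M_petal by simp

lemma is_cocycle_iff_eq_f_M: "is_cocycle G j f \<longleftrightarrow> (\<exists>r. f = f_M n G j k K C r)"
proof
  assume "is_cocycle G j f"
  moreover obtain w0 where "w0 \<in> K - C"
    using petal_vertex_exists by blast
  ultimately have "f = f_M n G j k K C (f (core @ [w0]))"
    by (blast intro: eq_f_M_if_petals_eq petals_eq_if_is_cocycle)
  then show "\<exists>r. f = f_M n G j k K C r" ..
next
  assume "\<exists>r. f = f_M n G j k K C r"
  then obtain r where "f = f_M n G j k K C r" ..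
  then have "f (core @ [w]) = r" if "w \<in> K - C" for w
    using that by (rule petal_eq_if_eq_f_M)
  then show "is_cocycle G j f"
    by (intro is_cocycle_if_petals_eq) simp
qed

lemma petal_eq_0_if_is_coboundary:
  assumes "is_coboundary G j f" "w \<in> K - C" "a \<notin> K" and shell: "shell G j (C \<union> {w, a})"
  shows "f (core @ [w]) = 0"
proof -
  have w: "w \<notin> C" and a: "a \<notin> C" "w \<noteq> a"
    using assms(2,3) C_subset_K by auto
  define xs where "xs = core @ [w, a]"
  have xs: "distinct xs" "length xs = j + 2" "set xs = C \<union> {w, a}"
    using w a finite_C by (auto simp: xs_def)
  have "ordered_simplex G j (del_nth l xs)" if "l < length xs" for l
  proof -
    have length: "length (del_nth l xs) = j + 1"
      using xs that by simp
    then have "card (set (del_nth l xs)) = j + 1"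
      using distinct_card[OF distinct_del_nth[OF xs(1)]] by simp
    moreover have "set (del_nth l xs) \<subseteq> C \<union> {w, a}"
      using set_del_nth_subset[of l xs] xs(3) by simp
    ultimately have "simplex G j (set (del_nth l xs))"
      using shell by (simp add: shell_def)
    then show ?thesis
      using xs(1) length
      by (simp add: simplex_def ordered_simplex_def distinct_del_nth)
  qed
  then have "coboundary_op f xs = 0"
    using assms(1) by (rule coboundary_op_eq_0_if_is_coboundary[rotated])
  moreover have "f (core @ [a]) = 0"
  proof (rule eq_0_if_not_petal)
    have "a \<in> set (core @ [a])" "\<forall>w'\<in>K - C. a \<notin> insert w' C"
      using assms(3) C_subset_K by auto
    then show "\<forall>w'\<in>K - C. set (core @ [a]) \<noteq> insert w' C"
      by blast
  qed
  ultimately show ?thesis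
    using coboundary_op_core_pair[OF w a] by (simp add: xs_def)
qed

lemma is_cocycle_not_coboundary_iff:
  assumes "w \<in> K - C" "a \<notin> K" "shell G j (C \<union> {w, a})"
  shows "is_cocycle G j f \<and> \<not> is_coboundary G j f \<longleftrightarrow> (\<exists>r. r \<noteq> 0 \<and> f = f_M n G j k K C r)"
proof
  assume "is_cocycle G j f \<and> \<not> is_coboundary G j f"
  then obtain r where r: "f = f_M n G j k K C r" and "\<not> is_coboundary G j f"
    using is_cocycle_iff_eq_f_M by blast
  have "r \<noteq> 0"
  proof
    assume "r = 0"
    then have "f = (\<lambda>_. 0)"
      using r by (simp add: f_M_zero)
    then show False
      using is_coboundary_zero \<open>\<not> is_coboundary G j f\<close> by metis
  qed
  with r show "\<exists>r. r \<noteq> 0 \<and> f = f_M n G j k K C r"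
    by blast
next
  assume "\<exists>r. r \<noteq> 0 \<and> f = f_M n G j k K C r"
  then obtain r where r: "r \<noteq> 0" "f = f_M n G j k K C r"
    by blast
  then have "is_cocycle G j f"
    using is_cocycle_iff_eq_f_M by blast
  moreover have "\<not> is_coboundary G j f"
  proof
    assume "is_coboundary G j f"
    then have "f (core @ [w]) = 0"
      by (rule petal_eq_0_if_is_coboundary[OF _ assms])
    then show False
      using petal_eq_if_eq_f_M[OF r(2) assms(1)] r(1) by simp
  qed
  ultimately show "is_cocycle G j f \<and> \<not> is_coboundary G j f"
    by blast
qed

end

lemma sorted_list_of_set_take_insert:
  assumes "card K = Suc j"
  defines "ks \<equiv> sorted_list_of_set K"
  shows "ks ! j \<notin> set (take j ks)" and "K = insert (ks ! j) (set (take j ks))"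
proof -
  have ks: "length ks = Suc j" "distinct ks" "set ks = K"
    using assms card_ge_0_finite[of K] by (simp_all add: ks_def)
  have "ks ! j \<in> set (drop j ks)"
    using ks(1) by (simp add: in_set_conv_nth)
  then show "ks ! j \<notin> set (take j ks)"
    using set_take_disj_set_drop_if_distinct[OF ks(2) order_refl] by blast
  have "K = set (take (Suc j) ks)"
    using ks by simp
  also have "\<dots> = insert (ks ! j) (set (take j ks))"
    using ks(1) by (subst take_Suc_conv_app_nth) auto
  finally show "K = insert (ks ! j) (set (take j ks))" .
qed

lemma closed_flower_if_copy_M:
  assumes complex: "simplicial_complex n G" and "j \<le> k" "k \<le> d" and copy: "copy_M G d j k K C"
  shows "closed_flower n j k G K C"
proof (cases "j + 1 \<le> k")
  case True
  then have "simplex G k K \<and> C \<subseteq> K \<and> card C = j \<and> (\<forall>\<sigma>\<in>G. (\<exists>p\<in>flower K C. p \<subseteq> \<sigma>) \<longrightarrow> \<sigma> \<subseteq> K)"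
    using copy assms(3) unfolding copy_M_def by simp
  then show ?thesis
    unfolding closed_flower_def using complex assms(2) by blast
next
  case False
  then have k: "k = j"
    using assms(2) by simp
  then have K: "simplex G j K" and isolated: "\<forall>\<sigma>\<in>G. K \<subseteq> \<sigma> \<longrightarrow> \<sigma> = K"
    and C: "C = set (take j (sorted_list_of_set K))"
    using copy False unfolding copy_M_def by auto
  have card_K: "card K = Suc j"
    using K by (simp add: simplex_def)
  then have finite: "finite K"
    by (intro card_ge_0_finite) simp
  obtain v where v: "v \<notin> C" "K = insert v C"
    using sorted_list_of_set_take_insert[OF card_K] C by blast
  then have C_subset_K: "C \<subseteq> K" and card_C: "card C = j"
    using card_K finite by auto
  have "\<sigma> \<subseteq> K" if \<sigma>: "\<sigma> \<in> G" and p: "p \<in> flower K C" "p \<subseteq> \<sigma>" for \<sigma> p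
  proof -
    have "p = K"
      using p(1) v unfolding flower_def by blast
    then show ?thesis
      using isolated \<sigma> p(2) by blast
  qed
  then show ?thesis
    unfolding closed_flower_def using complex K C_subset_K card_C k by blast
qed

lemma petal_shell_if_copy_Mhat:
  assumes "j \<le> k" and copy: "copy_Mhat n G d j k K C w a"
  shows "\<exists>w'\<in>K - C. a \<notin> K \<and> shell G j (C \<union> {w', a})"
proof (cases "j + 1 \<le> k")
  case True
  then show ?thesis
    using copy unfolding copy_Mhat_def by auto
next
  case False
  then have "k = j" and K: "simplex G j K" and C: "C = set (take j (sorted_list_of_set K))"
    and a: "a \<notin> K" and shell: "shell G j (insert a K)"
    using assms unfolding copy_Mhat_def copy_M_def by auto
  have "card K = Suc j"
    using K by (simp add: simplex_def)
  then obtain v where "v \<notin> C" "K = insert v C"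
    using sorted_list_of_set_take_insert C by blast
  then show ?thesis
    using a shell by (intro bexI[of _ v]) (auto simp: insert_commute)
qed

theorem proposition4p8:
  fixes n d j k :: nat and G :: "nat set set" and K C :: "nat set"
    and f :: "nat list \<Rightarrow> 'r::ab_group_add"
  assumes "d \<ge> 2" and "1 \<le> j" and "j \<le> d - 1" and "j \<le> k" and "k \<le> d"
    and "simplicial_complex n G"
    and "copy_M G d j k K C"
    and "cochain G j f"
    and "support G j f \<subseteq> flower K C"
  shows "(is_cocycle G j f \<longleftrightarrow> (\<exists>r. f = f_M n G j k K C r)) \<and>
         ((\<exists>w a. copy_Mhat n G d j k K C w a) \<longrightarrow>
         (is_cocycle G j f \<and> \<not> is_coboundary G j f \<longleftrightarrow> (\<exists>r. r \<noteq> 0 \<and> f = f_M n G j k K C r)))"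
proof -
  interpret flower_cochain n j k G K C f
    using closed_flower_if_copy_M[OF assms(6,4,5,7)] assms(8,9)
    by (simp add: flower_cochain_def flower_cochain_axioms_def)
  have "is_cocycle G j f \<and> \<not> is_coboundary G j f \<longleftrightarrow> (\<exists>r. r \<noteq> 0 \<and> f = f_M n G j k K C r)"
    if copy: "copy_Mhat n G d j k K C w a" for w a
  proof -
    obtain w' where "w' \<in> K - C" "a \<notin> K" "shell G j (C \<union> {w', a})"
      using petal_shell_if_copy_Mhat[OF assms(4) copy] by blast
    then show ?thesis
      by (rule is_cocycle_not_coboundary_iff)
  qed
  then show ?thesis
    using is_cocycle_iff_eq_f_M by blast
qed

end
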